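(* For $n\ge 1$, let $\mathcal M(n)$ be the number of MAB pairs and $\overline{\mathcal M}(n)$ the number of MAU pairs $(u,v)$ with $u,v\in\{a,b\}^n$. Then the number of pairs $(u,v)\in\{a,b\}^n\times\{a,b\}^n$ that have an external abelian-border but no internal abelian-border equals $\dfrac{2^{2n}-\mathcal M(n)-\overline{\mathcal M}(n)}{2}$, and so does the number of pairs that have an internal abelian-border but no external abelian-border.
   Context: Let $\Sigma=\{a,b\}$. For a word $w$ and a letter $c$, $|w|_c$ denotes the number of occurrences of $c$ in $w$. Two words $x,y$ are abelian equivalent, written $x\sim_{\mathrm{abl}}y$, if $|x|_c=|y|_c$ for all $c\in\Sigma$. For words $u,v$: a pair $(x,y)$ is an internal abelian-border of $(u,v)$ if $x$ is a nonempty proper suffix of $u$, $y$ is a proper prefix of $v$, and $x\sim_{\mathrm{abl}}y$; it is an external abelian-border of $(u,v)$ if $x$ is a nonempty proper prefix of $u$, $y$ is a proper suffix of $v$, and $x\sim_{\mathrm{abl}}y$. The pair $(u,v)$ is mutually abelian-bordered (MAB) if it has both an internal and an external abelian-border, and mutually abelian-unbordered (MAU) if it has neither. *)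

theory Defs
  imports Complex_Main "HOL-Library.Sublist"
begin

datatype letter = a | b

definition abl_equiv :: "letter list \<Rightarrow> letter list \<Rightarrow> bool" where
  "abl_equiv x y \<longleftrightarrow> (\<forall>c. count_list x c = count_list y c)"

definition internal_abl_border :: "letter list \<Rightarrow> letter list \<Rightarrow> letter list \<Rightarrow> letter list \<Rightarrow> bool" where
  "internal_abl_border u v x y \<longleftrightarrow>
     x \<noteq> [] \<and> strict_suffix x u \<and> strict_prefix y v \<and> abl_equiv x y"

definition external_abl_border :: "letter list \<Rightarrow> letter list \<Rightarrow> letter list \<Rightarrow> letter list \<Rightarrow> bool" where
  "external_abl_border u v x y \<longleftrightarrow>
     x \<noteq> [] \<and> strict_prefix x u \<and> strict_suffix y v \<and> abl_equiv x y"

definition has_internal :: "letter list \<Rightarrow> letter list \<Rightarrow> bool" where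
  "has_internal u v \<longleftrightarrow> (\<exists>x y. internal_abl_border u v x y)"

definition has_external :: "letter list \<Rightarrow> letter list \<Rightarrow> bool" where
  "has_external u v \<longleftrightarrow> (\<exists>x y. external_abl_border u v x y)"

definition MAB :: "letter list \<Rightarrow> letter list \<Rightarrow> bool" where
  "MAB u v \<longleftrightarrow> has_internal u v \<and> has_external u v"

definition MAU :: "letter list \<Rightarrow> letter list \<Rightarrow> bool" where
  "MAU u v \<longleftrightarrow> \<not> has_internal u v \<and> \<not> has_external u v"

text \<open>All words of length n over {a,b} (the type letter has exactly these two elements).\<close>
definition words :: "nat \<Rightarrow> letter list set" where
  "words n = {w. length w = n}"

definition M_count :: "nat \<Rightarrow> nat" where
  "M_count n = card {(u, v). u \<in> words n \<and> v \<in> words n \<and> MAB u v}"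

definition Mbar_count :: "nat \<Rightarrow> nat" where
  "Mbar_count n = card {(u, v). u \<in> words n \<and> v \<in> words n \<and> MAU u v}"

end

theory Submission
  imports Defs
begin

text \<open>Swapping the two words exchanges internal and external abelian-borders, since
  \<open>(x, y)\<close> is an internal border of \<open>(u, v)\<close> iff \<open>(y, x)\<close> is an external border of
  \<open>(v, u)\<close>. Hence the pairs with only an external border and those with only an internal
  border are equinumerous, and together with the MAB and MAU pairs they partition the
  \<open>2\<^sup>2\<^sup>n\<close> pairs of words of length \<open>n\<close>.\<close>

lemma length_eq_count_list_a_b: "length x = count_list x a + count_list x b"
proof (induction x)
  case (Cons c x)
  then show ?case by (cases c) auto
qed simp

lemma abl_equiv_length: "abl_equiv x y \<Longrightarrow> length x = length y"
  unfolding abl_equiv_def by (metis length_eq_count_list_a_b)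

lemma abl_equiv_sym: "abl_equiv x y \<Longrightarrow> abl_equiv y x"
  unfolding abl_equiv_def by simp

lemma internal_abl_border_iff_external_swap:
  "internal_abl_border u v x y \<longleftrightarrow> external_abl_border v u y x"
  unfolding internal_abl_border_def external_abl_border_def
  by (metis abl_equiv_length abl_equiv_sym length_0_conv)

lemma has_internal_iff_has_external_swap: "has_internal u v \<longleftrightarrow> has_external v u"
  unfolding has_internal_def has_external_def
  by (metis internal_abl_border_iff_external_swap)

lemma UNIV_letter: "(UNIV :: letter set) = {a, b}"
  using letter.exhaust by auto

lemma words_eq_lists_length: "words n = {xs. set xs \<subseteq> UNIV \<and> length xs = n}"
  unfolding words_def by auto

lemma finite_words: "finite (words n)"
  unfolding words_eq_lists_length by (rule finite_lists_length_eq) (simp add: UNIV_letter)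

lemma card_words: "card (words n) = 2 ^ n"
  unfolding words_eq_lists_length
  by (subst card_lists_length_eq) (simp_all add: UNIV_letter numeral_2_eq_2)

lemma card_pairs_swap:
  "card {(u, v). u \<in> A \<and> v \<in> A \<and> R v u} = card {(u, v). u \<in> A \<and> v \<in> A \<and> R u v}"
proof -
  have "{(u, v). u \<in> A \<and> v \<in> A \<and> R v u} = prod.swap ` {(u, v). u \<in> A \<and> v \<in> A \<and> R u v}"
    by auto
  then show ?thesis
    by (simp add: card_image)
qed

lemma card_product_partition:
  assumes "finite A" "finite B"
  shows "card (A \<times> B) =
      card {(u, v). u \<in> A \<and> v \<in> B \<and> P u v \<and> Q u v}
    + card {(u, v). u \<in> A \<and> v \<in> B \<and> \<not> P u v \<and> \<not> Q u v}
    + card {(u, v). u \<in> A \<and> v \<in> B \<and> P u v \<and> \<not> Q u v}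
    + card {(u, v). u \<in> A \<and> v \<in> B \<and> Q u v \<and> \<not> P u v}"
    (is "_ = card ?PQ + card ?NN + card ?PN + card ?NQ")
proof -
  have parts_finite: "finite {(u, v). u \<in> A \<and> v \<in> B \<and> S u v}" for S
    by (rule finite_subset[of _ "A \<times> B"]) (auto simp: assms)
  have "A \<times> B = ?PQ \<union> ?NN \<union> ?PN \<union> ?NQ"
    by auto
  moreover have "?PQ \<inter> ?NN = {}" "?PQ \<inter> ?PN = {}" "?PQ \<inter> ?NQ = {}"
    "?NN \<inter> ?PN = {}" "?NN \<inter> ?NQ = {}" "?PN \<inter> ?NQ = {}"
    by auto
  ultimately show ?thesis
    by (simp add: card_Un_disjoint parts_finite Int_Un_distrib2)
qed

theorem mainTheorem13:
  fixes n :: nat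
  assumes "n \<ge> 1"
  shows "real (card {(u, v). u \<in> words n \<and> v \<in> words n \<and> has_external u v \<and> \<not> has_internal u v})
           = (2 ^ (2 * n) - real (M_count n) - real (Mbar_count n)) / 2
       \<and> real (card {(u, v). u \<in> words n \<and> v \<in> words n \<and> has_internal u v \<and> \<not> has_external u v})
           = (2 ^ (2 * n) - real (M_count n) - real (Mbar_count n)) / 2"
proof -
  let ?E = "card {(u, v). u \<in> words n \<and> v \<in> words n \<and> has_external u v \<and> \<not> has_internal u v}"
  let ?I = "card {(u, v). u \<in> words n \<and> v \<in> words n \<and> has_internal u v \<and> \<not> has_external u v}"
  have "?I = ?E"
    using card_pairs_swap[where R = "\<lambda>u v. has_external u v \<and> \<not> has_internal u v"]
    by (simp add: has_internal_iff_has_external_swap)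
  moreover have "card (words n \<times> words n) = M_count n + Mbar_count n + ?I + ?E"
    using card_product_partition[OF finite_words finite_words, where P = has_internal and Q = has_external]
    by (simp only: M_count_def Mbar_count_def MAB_def MAU_def)
  moreover have "card (words n \<times> words n) = 2 ^ (2 * n)"
    by (simp add: card_cartesian_product card_words flip: power_add mult_2)
  ultimately have counts: "2 ^ (2 * n) = M_count n + Mbar_count n + 2 * ?E"
    by linarith
  have "(2::real) ^ (2 * n) = real (M_count n) + real (Mbar_count n) + 2 * real ?E"
    using arg_cong[OF counts, where f = real] by simp
  then have E_eq: "real ?E = (2 ^ (2 * n) - real (M_count n) - real (Mbar_count n)) / 2"
    by (simp add: field_simps)
  show ?thesis
    by (simp only: \<open>?I = ?E\<close> E_eq)
qed

end
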